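(* For all integers $d\ge 2$, $g\ge 1$ and $t\ge 4$ there exist positive integers $m,n$ with $n/m\ge t$ and a simple graph $G'$ of girth at least $g$ whose vertex set is partitioned into sets $A$ and $B$ with $|A|=m$ and $|B|=n$, such that every edge of $G'$ joins a vertex of $A$ to a vertex of $B$ and every vertex of $B$ has degree at least $d$ in $G'$.
   Context: The girth of a graph is the length of its shortest cycle (infinite for a forest). *)

theory Defs
  imports Main
begin

definition simple_graph :: "'a set \<Rightarrow> 'a set set \<Rightarrow> bool" where
  "simple_graph V E \<longleftrightarrow> finite V \<and> (\<forall>e\<in>E. e \<subseteq> V \<and> card e = 2)"

definition is_cycle :: "'a set \<Rightarrow> 'a set set \<Rightarrow> 'a list \<Rightarrow> bool" where
  "is_cycle V E cs \<longleftrightarrow> length cs \<ge> 3 \<and> distinct cs \<and> set cs \<subseteq> V \<and>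
     (\<forall>i < length cs. {cs ! i, cs ! ((i + 1) mod length cs)} \<in> E)"

definition girth_at_least :: "'a set \<Rightarrow> 'a set set \<Rightarrow> nat \<Rightarrow> bool" where
  "girth_at_least V E g \<longleftrightarrow> (\<forall>cs. is_cycle V E cs \<longrightarrow> length cs \<ge> g)"

definition degree :: "'a set set \<Rightarrow> 'a \<Rightarrow> nat" where
  "degree E v = card {e \<in> E. v \<in> e}"

end

theory Submission
  imports Defs
begin

text \<open>Start from the complete bipartite graph with parts of sizes d and t d. Replacing a
  graph by its covering graph for the voltage group of all edge sets (a vertex of the cover
  is a vertex together with a set of edges, and traversing an edge toggles it in the set)
  keeps the bipartition, multiplies both parts by the same factor, does not lower any
  degree and doubles the girth. After g rounds the girth is at least 2^g \<ge> g.\<close>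

lemma simple_graph_finite_edges: "simple_graph V E \<Longrightarrow> finite E"
  unfolding simple_graph_def by (meson PowI finite_Pow_iff finite_subset subsetI)

lemma girth_at_least_mono: "girth_at_least V E g \<Longrightarrow> g' \<le> g \<Longrightarrow> girth_at_least V E g'"
  unfolding girth_at_least_def by force

definition bipartition :: "'a set \<Rightarrow> 'a set set \<Rightarrow> 'a set \<Rightarrow> 'a set \<Rightarrow> bool" where
  "bipartition V E A B \<longleftrightarrow> A \<union> B = V \<and> A \<inter> B = {} \<and> (\<forall>e\<in>E. \<exists>a\<in>A. \<exists>b\<in>B. e = {a, b})"

lemma simple_graph_image:
  assumes f: "inj_on f V" and sg: "simple_graph V E"
  shows "simple_graph (f ` V) ((`) f ` E)"
  unfolding simple_graph_def
proof (intro conjI ballI)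
  show "finite (f ` V)" using sg unfolding simple_graph_def by simp
  fix e' assume "e' \<in> (`) f ` E"
  then obtain e where e: "e \<in> E" "e' = f ` e" by blast
  then have "e \<subseteq> V" "card e = 2" using sg unfolding simple_graph_def by auto
  then show "e' \<subseteq> f ` V" "card e' = 2"
    using e(2) card_image[OF inj_on_subset[OF f]] by auto
qed

lemma girth_at_least_image:
  assumes f: "inj_on f V" and sg: "simple_graph V E" and girth: "girth_at_least V E g"
  shows "girth_at_least (f ` V) ((`) f ` E) g"
  unfolding girth_at_least_def
proof (intro allI impI)
  fix cs assume cyc: "is_cycle (f ` V) ((`) f ` E) cs"
  define h where "h = inv_into V f"
  have "is_cycle V E (map h cs)"
    unfolding is_cycle_def
  proof (intro conjI allI impI)
    show "3 \<le> length (map h cs)" using cyc unfolding is_cycle_def by simp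
    show "distinct (map h cs)" "set (map h cs) \<subseteq> V"
      using cyc inj_on_subset[OF inj_on_inv_into[of "f ` V" f V]]
      unfolding is_cycle_def h_def by (auto simp: distinct_map inv_into_into)
    fix i assume i: "i < length (map h cs)"
    let ?j = "(i + 1) mod length cs"
    obtain e where e: "e \<in> E" "{cs ! i, cs ! ?j} = f ` e"
      using cyc i unfolding is_cycle_def by auto
    have "e \<subseteq> V" using sg e(1) unfolding simple_graph_def by blast
    then have "h ` {cs ! i, cs ! ?j} = e" unfolding e(2) h_def using f by simp
    moreover have "?j < length cs" using i by (intro mod_less_divisor) auto
    ultimately show "{map h cs ! i, map h cs ! ((i + 1) mod length (map h cs))} \<in> E"
      using e(1) i by simp
  qed
  then show "g \<le> length cs" using girth unfolding girth_at_least_def by fastforce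
qed

lemma degree_image:
  assumes f: "inj_on f V" and sg: "simple_graph V E" and "v \<in> V"
  shows "degree ((`) f ` E) (f v) = degree E v"
proof -
  have EV: "e \<subseteq> V" if "e \<in> E" for e using sg that unfolding simple_graph_def by blast
  have "{e' \<in> (`) f ` E. f v \<in> e'} = (`) f ` {e \<in> E. v \<in> e}"
    using inj_on_image_mem_iff[OF f \<open>v \<in> V\<close> EV] by blast
  moreover have "inj_on ((`) f) {e \<in> E. v \<in> e}"
  proof (rule inj_on_image[OF inj_on_subset[OF f]])
    show "\<Union>{e \<in> E. v \<in> e} \<subseteq> V" using EV by blast
  qed
  ultimately show ?thesis unfolding degree_def by (simp add: card_image)
qed

lemma bipartition_image:
  assumes f: "inj_on f V" and "bipartition V E A B"
  shows "bipartition (f ` V) ((`) f ` E) (f ` A) (f ` B)"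
proof -
  have "A \<union> B = V" "A \<inter> B = {}" "\<forall>e\<in>E. \<exists>a\<in>A. \<exists>b\<in>B. e = {a, b}"
    using assms(2) unfolding bipartition_def by auto
  moreover have "f ` A \<inter> f ` B = {}"
    using inj_on_image_Int[OF f, of A B] \<open>A \<union> B = V\<close> \<open>A \<inter> B = {}\<close> by auto
  ultimately show ?thesis
    unfolding bipartition_def by (auto 0 4 intro: bexI[of _ "f a" for a])
qed

definition toggle :: "'a set \<Rightarrow> 'a \<Rightarrow> 'a set" where
  "toggle S x = (if x \<in> S then S - {x} else insert x S)"

lemma toggle_toggle [simp]: "toggle (toggle S x) x = S"
  unfolding toggle_def by auto

lemma toggle_subset: "S \<subseteq> E \<Longrightarrow> x \<in> E \<Longrightarrow> toggle S x \<subseteq> E"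
  unfolding toggle_def by auto

lemma mem_toggle_iterate:
  assumes step: "\<And>i. X (Suc i) = toggle (X i) (f i)"
  shows "x \<in> X (s + j) \<longleftrightarrow> (x \<in> X s \<longleftrightarrow> even (card {k \<in> {s..<s + j}. f k = x}))"
proof (induction j)
  case 0
  show ?case by simp
next
  case (Suc j)
  have "{k \<in> {s..<s + Suc j}. f k = x} =
      (if f (s + j) = x then insert (s + j) else id) {k \<in> {s..<s + j}. f k = x}"
    by (auto simp: less_Suc_eq)
  then show ?case
    using Suc.IH step[of "s + j"] by (auto simp: toggle_def)
qed

lemma distinct_prefix_even_multiplicities:
  fixes f :: "nat \<Rightarrow> 'b"
  assumes inj: "inj_on f {s..<s + l}" and "l \<le> L"
    and even: "\<And>x. even (card {k \<in> {s..<s + L}. f k = x})"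
  shows "2 * l \<le> L"
proof -
  have "f ` {s..<s + l} \<subseteq> f ` {s + l..<s + L}"
  proof
    fix x assume "x \<in> f ` {s..<s + l}"
    then obtain k0 where k0: "k0 \<in> {s..<s + l}" "x = f k0" by auto
    show "x \<in> f ` {s + l..<s + L}"
    proof (rule ccontr)
      assume "x \<notin> f ` {s + l..<s + L}"
      then have "{k \<in> {s..<s + L}. f k = x} = {k0}"
      proof (intro equalityI subsetI)
        fix k assume k: "k \<in> {k \<in> {s..<s + L}. f k = x}"
        then have "k < s + l"
          using \<open>x \<notin> f ` {s + l..<s + L}\<close> by (auto simp: not_le[symmetric])
        then show "k \<in> {k0}" using k k0 inj by (auto simp: inj_on_def)
      qed (use k0 \<open>l \<le> L\<close> in auto)
      then show False using even[of x] by simp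
    qed
  qed
  then have "card (f ` {s..<s + l}) \<le> card {s + l..<s + L}"
    by (meson card_image_le card_mono finite_atLeastLessThan finite_imageI le_trans)
  then show ?thesis using inj by (simp add: card_image)
qed

lemma minimal_return_is_cycle:
  fixes w :: "nat \<Rightarrow> 'a"
  assumes edge: "\<And>i. {w i, w (Suc i)} \<in> E" and wV: "\<And>i. w i \<in> V"
    and ret: "w i0 = w (i0 + l)" and "3 \<le> l"
    and minl: "\<And>i l'. 0 < l' \<Longrightarrow> l' < l \<Longrightarrow> w i \<noteq> w (i + l')"
  shows "is_cycle V E (map (\<lambda>k. w (i0 + k)) [0..<l])"
  unfolding is_cycle_def
proof (intro conjI allI impI)
  have "inj_on (\<lambda>k. w (i0 + k)) {0..<l}"
  proof (rule linorder_inj_onI')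
    fix a b assume "a \<in> {0..<l}" "b \<in> {0..<l}" "a < b"
    then show "w (i0 + a) \<noteq> w (i0 + b)"
      using minl[of "b - a" "i0 + a"] by simp
  qed
  then show "distinct (map (\<lambda>k. w (i0 + k)) [0..<l])"
    by (simp add: distinct_map)
  fix k assume "k < length (map (\<lambda>k. w (i0 + k)) [0..<l])"
  then have "k < l" by simp
  moreover have "map (\<lambda>k. w (i0 + k)) [0..<l] ! ((k + 1) mod l) = w (i0 + Suc k)"
    using \<open>k < l\<close> ret by (cases "Suc k = l") auto
  ultimately show "{map (\<lambda>k. w (i0 + k)) [0..<l] ! k,
      map (\<lambda>k. w (i0 + k)) [0..<l] ! ((k + 1) mod length (map (\<lambda>k. w (i0 + k)) [0..<l]))} \<in> E"
    using edge[of "i0 + k"] by simp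
qed (use \<open>3 \<le> l\<close> wV in auto)

lemma minimal_return_edges_inj:
  fixes w :: "nat \<Rightarrow> 'a"
  assumes nb: "\<And>i. w i \<noteq> w (Suc (Suc i))"
    and minl: "\<And>i l'. 0 < l' \<Longrightarrow> l' < l \<Longrightarrow> w i \<noteq> w (i + l')"
  shows "inj_on (\<lambda>k. {w k, w (Suc k)}) {i0..<i0 + l}"
proof (rule linorder_inj_onI')
  fix a b assume ab: "a \<in> {i0..<i0 + l}" "b \<in> {i0..<i0 + l}" "a < b"
  show "{w a, w (Suc a)} \<noteq> {w b, w (Suc b)}"
  proof
    assume "{w a, w (Suc a)} = {w b, w (Suc b)}"
    then consider "w a = w b" | "w a = w (Suc b)" "w (Suc a) = w b"
      by (auto simp: doubleton_eq_iff)
    then show False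
    proof cases
      case 1
      moreover have "b - a < l" using ab by auto
      ultimately show False using minl[of "b - a" a] ab by auto
    next
      case 2
      show False
      proof (cases "b = Suc a")
        case True
        then show False using 2 nb[of a] by simp
      next
        case False
        moreover have "0 < b - Suc a" "b - Suc a < l" using ab False by auto
        ultimately show False using 2 minl[of "b - Suc a" "Suc a"] by auto
      qed
    qed
  qed
qed

text \<open>The first return of a non-backtracking closed walk closes a cycle of the base
  graph, whose edges are distinct; if every edge is traversed an even number of times,
  each of them is traversed again in the rest of the walk.\<close>
lemma nonbacktracking_even_closed_walk_length:
  fixes w :: "nat \<Rightarrow> 'a"
  assumes sg: "simple_graph V E" and girth: "girth_at_least V E g"
    and edge: "\<And>i. {w i, w (Suc i)} \<in> E"
    and nb: "\<And>i. w i \<noteq> w (Suc (Suc i))"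
    and period: "\<And>i. w (i + L) = w i" and "0 < L"
    and even: "\<And>s x. even (card {k \<in> {s..<s + L}. {w k, w (Suc k)} = x})"
  shows "2 * g \<le> L"
proof -
  have wV: "w i \<in> V" for i
    using sg edge[of i] unfolding simple_graph_def by auto
  have no_loop: "w i \<noteq> w (Suc i)" for i
  proof -
    have "card {w i, w (Suc i)} = 2" using sg edge[of i] unfolding simple_graph_def by blast
    then show ?thesis by (auto split: if_splits)
  qed
  define P where "P l \<longleftrightarrow> 0 < l \<and> (\<exists>i. w i = w (i + l))" for l
  define l where "l = (LEAST l. P l)"
  have "P L" unfolding P_def using \<open>0 < L\<close> period by metis
  then have "P l" and "l \<le> L"
    unfolding l_def by (auto intro: LeastI Least_le)
  then obtain i0 where ret: "w i0 = w (i0 + l)" and "0 < l"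
    unfolding P_def by auto
  have minl: "w i \<noteq> w (i + l')" if "0 < l'" "l' < l" for i l'
    using not_less_Least[of l' P] that unfolding l_def P_def by auto
  have "l \<noteq> 1" "l \<noteq> 2"
    using ret no_loop[of i0] nb[of i0] by (auto simp: numeral_2_eq_2)
  with \<open>0 < l\<close> have "3 \<le> l" by linarith
  then have "is_cycle V E (map (\<lambda>k. w (i0 + k)) [0..<l])"
    using minimal_return_is_cycle[OF edge wV ret _ minl] by blast
  then have "g \<le> l"
    using girth unfolding girth_at_least_def by fastforce
  moreover have "2 * l \<le> L"
    by (rule distinct_prefix_even_multiplicities[OF minimal_return_edges_inj[OF nb minl] \<open>l \<le> L\<close> even])
  ultimately show ?thesis by linarith
qed

text \<open>A closed walk of the base graph lifts to a closed walk of the cover exactly when it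
  uses every edge an even number of times.\<close>
definition toggle_cover :: "'a set set \<Rightarrow> ('a \<times> 'a set set) set set" where
  "toggle_cover E = {{(v, S), (u, toggle S {v, u})} | v u S. {v, u} \<in> E \<and> S \<subseteq> E}"

lemma toggle_cover_edgeD:
  assumes sg: "simple_graph V E" and pq: "{p, q} \<in> toggle_cover E"
  shows "{fst p, fst q} \<in> E" "fst p \<noteq> fst q" "snd q = toggle (snd p) {fst p, fst q}"
proof -
  obtain v u S where vu: "{p, q} = {(v, S), (u, toggle S {v, u})}" "{v, u} \<in> E"
    using pq unfolding toggle_cover_def by blast
  have "card {v, u} = 2" using sg vu(2) unfolding simple_graph_def by blast
  then have "v \<noteq> u" by (auto split: if_splits)
  with vu show "{fst p, fst q} \<in> E" "fst p \<noteq> fst q" "snd q = toggle (snd p) {fst p, fst q}"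
    by (auto simp: doubleton_eq_iff insert_commute)
qed

lemma girth_at_least_toggle_cover:
  assumes sg: "simple_graph V E" and girth: "girth_at_least V E g"
  shows "girth_at_least (V \<times> Pow E) (toggle_cover E) (2 * g)"
  unfolding girth_at_least_def
proof (intro allI impI)
  fix cs assume cyc: "is_cycle (V \<times> Pow E) (toggle_cover E) cs"
  define L where "L = length cs"
  have "3 \<le> L" and "distinct cs"
    and edge: "\<And>i. i < L \<Longrightarrow> {cs ! i, cs ! ((i + 1) mod L)} \<in> toggle_cover E"
    using cyc unfolding is_cycle_def L_def by auto
  then have "0 < L" by simp
  define w where "w i = fst (cs ! (i mod L))" for i
  define X where "X i = snd (cs ! (i mod L))" for i
  have step: "{w i, w (Suc i)} \<in> E" "X (Suc i) = toggle (X i) {w i, w (Suc i)}" for i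
    using toggle_cover_edgeD[OF sg edge[of "i mod L"]] \<open>3 \<le> L\<close>
    unfolding w_def X_def by (simp_all add: mod_Suc_eq)
  have period: "w (i + L) = w i" "X (i + L) = X i" for i
    unfolding w_def X_def by simp_all
  have even: "even (card {k \<in> {s..<s + L}. {w k, w (Suc k)} = x})" for s x
    using mem_toggle_iterate[of X, OF step(2), of x s L] period(2)[of s] by (simp add: add.commute) blast
  have nb: "w i \<noteq> w (Suc (Suc i))" for i
  proof
    assume "w i = w (Suc (Suc i))"
    then have "X (Suc (Suc i)) = X i" using step(2)[of i] step(2)[of "Suc i"]
      by (simp add: insert_commute)
    with \<open>w i = w (Suc (Suc i))\<close> have "cs ! (i mod L) = cs ! (Suc (Suc i) mod L)"
      unfolding w_def X_def by (simp add: prod_eq_iff)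
    moreover have "i mod L < length cs" "Suc (Suc i) mod L < length cs"
      using \<open>0 < L\<close> unfolding L_def by simp_all
    ultimately have "Suc (Suc i) mod L = i mod L"
      using \<open>distinct cs\<close> nth_eq_iff_index_eq by metis
    then have "L dvd 2" using mod_eq_dvd_iff_nat[of i "Suc (Suc i)" L] by simp
    then show False using \<open>3 \<le> L\<close> by (auto dest: dvd_imp_le)
  qed
  have "2 * g \<le> L"
    using nonbacktracking_even_closed_walk_length[OF sg girth step(1) nb period(1) _ even]
      \<open>3 \<le> L\<close> by simp
  then show "2 * g \<le> length cs" unfolding L_def .
qed

lemma simple_graph_toggle_cover:
  assumes "simple_graph V E"
  shows "simple_graph (V \<times> Pow E) (toggle_cover E)"
  unfolding simple_graph_def
proof (intro conjI ballI)
  have "E \<subseteq> Pow V" and "finite V" using assms unfolding simple_graph_def by auto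
  then show "finite (V \<times> Pow E)" by (simp add: finite_subset)
  fix e assume "e \<in> toggle_cover E"
  then obtain v u S where e: "e = {(v, S), (u, toggle S {v, u})}" "{v, u} \<in> E" "S \<subseteq> E"
    unfolding toggle_cover_def by blast
  with \<open>e \<in> toggle_cover E\<close> show "card e = 2"
    using toggle_cover_edgeD(2)[OF assms, of "(v, S)" "(u, toggle S {v, u})"] by auto
  show "e \<subseteq> V \<times> Pow E" using e assms toggle_subset[OF e(3,2)] unfolding simple_graph_def by auto
qed

lemma bipartition_toggle_cover:
  assumes "bipartition V E A B"
  shows "bipartition (V \<times> Pow E) (toggle_cover E) (A \<times> Pow E) (B \<times> Pow E)"
  unfolding bipartition_def
proof (intro conjI ballI)
  show "A \<times> Pow E \<union> B \<times> Pow E = V \<times> Pow E" "A \<times> Pow E \<inter> B \<times> Pow E = {}"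
    using assms unfolding bipartition_def by auto
  fix e assume "e \<in> toggle_cover E"
  then obtain v u S where e: "e = {(v, S), (u, toggle S {v, u})}" "{v, u} \<in> E" "S \<subseteq> E"
    unfolding toggle_cover_def by blast
  have S': "toggle S {v, u} \<in> Pow E" using toggle_subset[OF e(3,2)] by simp
  obtain a b where "a \<in> A" "b \<in> B" "{v, u} = {a, b}"
    using assms e(2) unfolding bipartition_def by blast
  then consider "v \<in> A" "u \<in> B" | "u \<in> A" "v \<in> B"
    by (auto simp: doubleton_eq_iff)
  then show "\<exists>a\<in>A \<times> Pow E. \<exists>b\<in>B \<times> Pow E. e = {a, b}"
  proof cases
    case 1
    then show ?thesis using e(1,3) S'
      by (intro bexI[of _ "(v, S)"] bexI[of _ "(u, toggle S {v, u})"]) auto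
  next
    case 2
    moreover have "e = {(u, toggle S {v, u}), (v, S)}" using e(1) by (simp add: insert_commute)
    ultimately show ?thesis using e(3) S'
      by (intro bexI[of _ "(u, toggle S {v, u})"] bexI[of _ "(v, S)"]) auto
  qed
qed

lemma degree_le_toggle_cover:
  assumes sg: "simple_graph V E" and "S \<subseteq> E"
  shows "degree E v \<le> degree (toggle_cover E) (v, S)"
proof -
  let ?F = "{e' \<in> toggle_cover E. (v, S) \<in> e'}"
  have "{e \<in> E. v \<in> e} \<subseteq> (\<lambda>e'. fst ` e') ` ?F"
  proof
    fix e assume e: "e \<in> {e \<in> E. v \<in> e}"
    then obtain u where "e = {v, u}"
      using sg unfolding simple_graph_def by (auto simp: card_2_iff doubleton_eq_iff)
    then have "{(v, S), (u, toggle S e)} \<in> ?F"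
      using e \<open>S \<subseteq> E\<close> unfolding toggle_cover_def by blast
    moreover have "e = fst ` {(v, S), (u, toggle S e)}" using \<open>e = {v, u}\<close> by simp
    ultimately show "e \<in> (\<lambda>e'. fst ` e') ` ?F" by (rule rev_image_eqI)
  qed
  moreover have "finite ?F"
    using simple_graph_finite_edges[OF simple_graph_toggle_cover[OF sg]] by simp
  ultimately have "card {e \<in> E. v \<in> e} \<le> card ((\<lambda>e'. fst ` e') ` ?F)"
    by (intro card_mono) auto
  also have "\<dots> \<le> card ?F" by (rule card_image_le[OF \<open>finite ?F\<close>])
  finally show ?thesis unfolding degree_def .
qed

definition unbalanced_bipartite ::
    "nat \<Rightarrow> nat \<Rightarrow> nat \<Rightarrow> 'a set \<Rightarrow> 'a set set \<Rightarrow> 'a set \<Rightarrow> 'a set \<Rightarrow> bool" where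
  "unbalanced_bipartite d t g V E A B \<longleftrightarrow>
     simple_graph V E \<and> girth_at_least V E g \<and> bipartition V E A B \<and>
     0 < card A \<and> t * card A \<le> card B \<and> (\<forall>v\<in>B. d \<le> degree E v)"

lemma unbalanced_bipartite_toggle_cover:
  assumes "unbalanced_bipartite d t g V E A B"
  shows "unbalanced_bipartite d t (2 * g) (V \<times> Pow E) (toggle_cover E) (A \<times> Pow E) (B \<times> Pow E)"
proof -
  have sg: "simple_graph V E" and girth: "girth_at_least V E g" and bip: "bipartition V E A B"
    and "0 < card A" "t * card A \<le> card B" and deg: "\<forall>v\<in>B. d \<le> degree E v"
    using assms unfolding unbalanced_bipartite_def by auto
  have "finite A" "finite B"
    using sg bip unfolding simple_graph_def bipartition_def by (auto intro: finite_subset)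
  with simple_graph_finite_edges[OF sg]
  have card_A: "card (A \<times> Pow E) = card A * 2 ^ card E"
    and card_B: "card (B \<times> Pow E) = card B * 2 ^ card E"
    by (simp_all add: card_cartesian_product card_Pow)
  show ?thesis
    unfolding unbalanced_bipartite_def
  proof (intro conjI ballI)
    show "0 < card (A \<times> Pow E)" using \<open>0 < card A\<close> card_A by simp
    show "t * card (A \<times> Pow E) \<le> card (B \<times> Pow E)"
      using \<open>t * card A \<le> card B\<close> unfolding card_A card_B mult.assoc[symmetric] by simp
    fix x assume "x \<in> B \<times> Pow E"
    then obtain b S where "x = (b, S)" "b \<in> B" "S \<subseteq> E" by blast
    then show "d \<le> degree (toggle_cover E) x"
      using deg degree_le_toggle_cover[OF sg \<open>S \<subseteq> E\<close>, of b] by fastforce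
  qed (use simple_graph_toggle_cover[OF sg] girth_at_least_toggle_cover[OF sg girth]
        bipartition_toggle_cover[OF bip] in auto)
qed

lemma unbalanced_bipartite_image:
  assumes f: "inj_on f V" and G: "unbalanced_bipartite d t g V E A B"
  shows "unbalanced_bipartite d t g (f ` V) ((`) f ` E) (f ` A) (f ` B)"
proof -
  have sg: "simple_graph V E" and bip: "bipartition V E A B"
    using G unfolding unbalanced_bipartite_def by auto
  then have "A \<subseteq> V" "B \<subseteq> V" unfolding bipartition_def by auto
  then have "card (f ` A) = card A" "card (f ` B) = card B"
    using card_image inj_on_subset[OF f] by metis+
  then show ?thesis
    using G simple_graph_image[OF f sg] girth_at_least_image[OF f sg] bipartition_image[OF f bip]
      degree_image[OF f sg] \<open>B \<subseteq> V\<close>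
    unfolding unbalanced_bipartite_def by auto
qed

lemma unbalanced_bipartite_complete:
  fixes d t :: nat
  assumes "0 < d"
  defines "A \<equiv> {..<d}" and "B \<equiv> {d..<d + t * d}"
  shows "unbalanced_bipartite d t 1 (A \<union> B) {{a, b} | a b. a \<in> A \<and> b \<in> B} A B"
  unfolding unbalanced_bipartite_def
proof (intro conjI ballI)
  let ?E = "{{a, b} | a b. a \<in> A \<and> b \<in> B}"
  have "A \<inter> B = {}" unfolding A_def B_def by auto
  have "simple_graph (A \<union> B) ?E"
    unfolding simple_graph_def
  proof (intro conjI ballI)
    show "finite (A \<union> B)" unfolding A_def B_def by simp
    fix e assume "e \<in> ?E"
    then obtain a b where "e = {a, b}" "a \<in> A" "b \<in> B" by blast
    moreover have "a \<noteq> b" using \<open>a \<in> A\<close> \<open>b \<in> B\<close> \<open>A \<inter> B = {}\<close> by blast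
    ultimately show "e \<subseteq> A \<union> B" "card e = 2" by auto
  qed
  then show "simple_graph (A \<union> B) ?E" .
  show "girth_at_least (A \<union> B) ?E 1"
    unfolding girth_at_least_def is_cycle_def by auto
  show "bipartition (A \<union> B) ?E A B"
    using \<open>A \<inter> B = {}\<close> unfolding bipartition_def by blast
  show "0 < card A" "t * card A \<le> card B"
    unfolding A_def B_def using assms by simp_all
  fix b assume "b \<in> B"
  have "inj_on (\<lambda>a. {a, b}) A"
    using \<open>b \<in> B\<close> \<open>A \<inter> B = {}\<close> by (auto simp: inj_on_def doubleton_eq_iff)
  then have "card A = card ((\<lambda>a. {a, b}) ` A)" by (simp add: card_image)
  also have "\<dots> \<le> card {e \<in> ?E. b \<in> e}"
  proof (rule card_mono)
    show "finite {e \<in> ?E. b \<in> e}"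
      using simple_graph_finite_edges[OF \<open>simple_graph (A \<union> B) ?E\<close>] by simp
    show "(\<lambda>a. {a, b}) ` A \<subseteq> {e \<in> ?E. b \<in> e}" using \<open>b \<in> B\<close> by blast
  qed
  finally have "card A \<le> card {e \<in> ?E. b \<in> e}" .
  then show "d \<le> degree ?E b" unfolding degree_def A_def by simp
qed

text \<open>The cover has vertices of a larger type, so each stage is relabelled by natural
  numbers to keep the induction on a single type.\<close>
lemma unbalanced_bipartite_girth_pow2:
  fixes d t :: nat
  assumes "0 < d"
  shows "\<exists>(V :: nat set) E A B. unbalanced_bipartite d t (2 ^ k) V E A B"
proof (induction k)
  case 0
  from unbalanced_bipartite_complete[OF assms, of t] show ?case
    unfolding power_0 by blast
next
  case (Suc k)
  then obtain V :: "nat set" and E A B where "unbalanced_bipartite d t (2 ^ k) V E A B"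
    by blast
  then have cover: "unbalanced_bipartite d t (2 ^ Suc k)
      (V \<times> Pow E) (toggle_cover E) (A \<times> Pow E) (B \<times> Pow E)"
    using unbalanced_bipartite_toggle_cover by fastforce
  then have "finite (V \<times> Pow E)"
    unfolding unbalanced_bipartite_def simple_graph_def by blast
  then obtain f :: "nat \<times> nat set set \<Rightarrow> nat" where "inj_on f (V \<times> Pow E)"
    using finite_imp_inj_to_nat_seg by blast
  then show ?case using unbalanced_bipartite_image[OF _ cover] by blast
qed

theorem lemma5p10:
  fixes d g t :: nat
  assumes "d \<ge> 2" and "g \<ge> 1" and "t \<ge> 4"
  shows "\<exists>(m::nat) (n::nat) (V::nat set) (E::nat set set) A B.
           m > 0 \<and> n > 0 \<and> n \<ge> t * m \<and>
           simple_graph V E \<and> girth_at_least V E g \<and>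
           A \<union> B = V \<and> A \<inter> B = {} \<and> card A = m \<and> card B = n \<and>
           (\<forall>e\<in>E. \<exists>a\<in>A. \<exists>b\<in>B. e = {a, b}) \<and>
           (\<forall>v\<in>B. degree E v \<ge> d)"
proof -
  obtain V :: "nat set" and E A B where G: "unbalanced_bipartite d t (2 ^ g) V E A B"
    using unbalanced_bipartite_girth_pow2[of d t g] assms(1) by auto
  then have "simple_graph V E" and girth: "girth_at_least V E (2 ^ g)"
    and "A \<union> B = V" "A \<inter> B = {}" "\<forall>e\<in>E. \<exists>a\<in>A. \<exists>b\<in>B. e = {a, b}"
    and "0 < card A" "t * card A \<le> card B" "\<forall>v\<in>B. d \<le> degree E v"
    unfolding unbalanced_bipartite_def bipartition_def by auto
  moreover have "girth_at_least V E g"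
    using girth_at_least_mono[OF girth] less_exp less_imp_le by blast
  moreover have "0 < card B"
    using \<open>0 < card A\<close> \<open>t * card A \<le> card B\<close> \<open>t \<ge> 4\<close>
    by (metis gr0I mult_is_0 not_numeral_le_zero le_0_eq)
  ultimately show ?thesis by blast
qed

end
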